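(* Let $T$ be the set of $(a_0,\dots,a_9)\in\mathbb{R}^{10}$ such that $P(x,a)=x^{11}-x^{10}+a_9x^9+\cdots+a_0$ satisfies $a_9,a_8,a_7,a_6<0$, $a_5,\dots,a_1>0$, $a_0<0$ and has exactly one positive and exactly eight negative roots, all simple. Suppose $T\ne\emptyset$, let $\Gamma$ be a connected component of $T$, $\bar\Gamma$ its closure, and let $H$ be the set of polynomials $P(x,a)$, $a\in\bar\Gamma$, all of whose roots are real. Then $H$ contains no polynomial having one triple positive root and negative roots of total multiplicity $8$. *)

theory Defs
  imports "HOL-Analysis.Analysis" "HOL-Library.Numeral_Type"
          "HOL-Computational_Algebra.Polynomial"
begin

text \<open>Coefficient a_k of a point a = (a_0,...,a_9) in R^10, for k < 10.
  The index type 10 has the ten elements of_nat 0, ..., of_nat 9.\<close>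
definition cf :: "real ^ 10 \<Rightarrow> nat \<Rightarrow> real" where
  "cf a k = a $ (of_nat k :: 10)"

definition Ppoly :: "real ^ 10 \<Rightarrow> real poly" where
  "Ppoly a = monom 1 11 - monom 1 10 + (\<Sum>k<10. monom (cf a k) k)"

definition Tset :: "(real ^ 10) set" where
  "Tset = {a. cf a 9 < 0 \<and> cf a 8 < 0 \<and> cf a 7 < 0 \<and> cf a 6 < 0
            \<and> (\<forall>k\<in>{1..5}. cf a k > 0) \<and> cf a 0 < 0
            \<and> card {x. x > 0 \<and> poly (Ppoly a) x = 0} = 1
            \<and> card {x. x < 0 \<and> poly (Ppoly a) x = 0} = 8
            \<and> (\<forall>x. poly (Ppoly a) x = 0 \<longrightarrow> order x (Ppoly a) = 1)}"

definition all_roots_real :: "real poly \<Rightarrow> bool" where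
  "all_roots_real p \<longleftrightarrow>
     (\<forall>z::complex. poly (map_poly complex_of_real p) z = 0 \<longrightarrow> z \<in> \<real>)"

end

theory Submission
  imports Defs
begin

text \<open>If a point a of the closure had a triple root x0 > 0 and negative roots of total
  multiplicity 8, these multiplicities would already exhaust the degree 11, so
  P(x,a) = (x - x0)^3 (x + b_1)...(x + b_8) with all b_i > 0 (all roots are then real
  automatically). The coefficient of x^10 gives S = b_1 + ... + b_8 = 3 x0 - 1 < 3 x0. The open
  condition a_1 > 0 on T survives as a_1 \<ge> 0 on the closure, and by Vieta
  a_1 = x0^3 b_1...b_8 (3/x0 - T) with T = 1/b_1 + ... + 1/b_8, so T \<le> 3/x0. Hence S T < 9,
  which contradicts the AM-HM inequality S T \<ge> 8^2.\<close>

lemma lead_coeff_prod_linear_factors [simp]: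
  "lead_coeff (\<Prod>x\<in>#M. [:-x, 1::'a::idom:]) = 1"
  by (induction M) (simp_all add: lead_coeff_mult del: mult_pCons_left)

lemma degree_prod_linear_factors [simp]:
  "degree (\<Prod>x\<in>#M. [:-x, 1::'a::idom:]) = size M"
proof (induction M)
  case (add r M)
  have "(\<Prod>x\<in>#M. [:-x, 1::'a:]) \<noteq> 0"
    using lead_coeff_prod_linear_factors[of M] by (metis leading_coeff_0_iff zero_neq_one)
  with add.IH show ?case by (simp add: degree_mult_eq del: mult_pCons_left)
qed simp

lemma coeff_prod_linear_factors_pred:
  fixes M :: "'a::idom multiset"
  assumes "M \<noteq> {#}"
  shows "coeff (\<Prod>x\<in>#M. [:-x, 1:]) (size M - 1) = - sum_mset M"
  using assms
proof (induction M)
  case (add r M)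
  show ?case
  proof (cases "M = {#}")
    case False
    then obtain m where m: "size M = Suc m" by (cases M) auto
    have "coeff (\<Prod>x\<in>#M. [:-x, 1:]) (Suc m) = 1"
      using lead_coeff_prod_linear_factors[of M] m by simp
    with add.IH False m show ?thesis by simp
  qed simp
qed simp

lemma coeff_prod_linear_factors_1:
  fixes M :: "'a::field multiset"
  assumes "0 \<notin># M"
  shows "coeff (\<Prod>x\<in>#M. [:-x, 1:]) 1 = - (\<Prod>x\<in>#M. -x) * (\<Sum>x\<in>#M. inverse x)"
  using assms
proof (induction M)
  case (add r M)
  have "coeff (\<Prod>x\<in>#M. [:-x, 1:]) 0 = (\<Prod>x\<in>#M. -x)"
    by (simp add: poly_0_coeff_0[symmetric] poly_prod_mset)
  with add show ?case by (simp add: algebra_simps)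
qed simp

lemma prod_linear_factors_proots_dvd:
  fixes p :: "'a::idom poly"
  shows "(\<Prod>x\<in>#proots p. [:-x, 1:]) dvd p"
proof (induction p rule: poly_root_order_induct)
  case (no_roots p)
  then have "proots p = {#}" by (simp add: multiset_eqI order_root)
  then show ?case by simp
next
  case (root p x n)
  then have "p \<noteq> 0" by auto
  then have "proots ([:-x, 1:] ^ n * p) = replicate_mset n x + proots p"
    by (simp add: proots_mult proots_power)
  with root.IH show ?case by (simp add: mult_dvd_mono)
qed simp

lemma poly_eq_prod_linear_factors_proots:
  fixes p :: "'a::idom poly"
  assumes "size (proots p) = degree p"
  shows "p = smult (lead_coeff p) (\<Prod>x\<in>#proots p. [:-x, 1:])"
proof (cases "p = 0")
  case False
  define R where "R = (\<Prod>x\<in>#proots p. [:-x, 1:])"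
  have "lead_coeff R = 1"
    unfolding R_def by (rule lead_coeff_prod_linear_factors)
  then have "R \<noteq> 0" by auto
  have "degree R = degree p"
    using assms by (simp add: R_def)
  obtain q where q: "p = R * q"
    using prod_linear_factors_proots_dvd unfolding R_def by (rule dvdE)
  with False \<open>R \<noteq> 0\<close> \<open>degree R = degree p\<close> have "degree q = 0"
    by (metis add_cancel_right_right degree_mult_eq mult_zero_right)
  then obtain c where "q = [:c:]" by (rule degree_eq_zeroE)
  with q have "p = smult c R" by simp
  with \<open>lead_coeff R = 1\<close> show ?thesis
    unfolding R_def[symmetric] by (simp add: lead_coeff_smult)
qed simp

lemma size_filter_proots:
  assumes "p \<noteq> 0"
  shows "size (filter_mset P (proots p)) = (\<Sum>x\<in>{x. P x \<and> poly p x = 0}. order x p)"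
proof -
  have "set_mset (filter_mset P (proots p)) = {x. P x \<and> poly p x = 0}"
    using assms by auto
  then show ?thesis
    using assms by (simp add: size_multiset_overloaded_eq)
qed

lemma sum_mset_negf:
  "(\<Sum>x\<in>#M. - f x) = - (\<Sum>x\<in>#M. f x :: 'a::ab_group_add)"
  by (induction M) simp_all

lemma sum_mset_nonneg:
  fixes M :: "'a::ordered_comm_monoid_add multiset"
  shows "(\<And>x. x \<in># M \<Longrightarrow> 0 \<le> x) \<Longrightarrow> 0 \<le> sum_mset M"
  by (induction M) auto

lemma prod_mset_pos:
  fixes M :: "'a::linordered_semidom multiset"
  shows "(\<And>x. x \<in># M \<Longrightarrow> 0 < x) \<Longrightarrow> 0 < prod_mset M"
  by (induction M) auto

lemma square_size_le_sum_mset_mult_sum_inverse: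
  fixes M :: "real multiset"
  assumes "\<forall>x\<in>#M. x > 0"
  shows "(real (size M))\<^sup>2 \<le> sum_mset M * (\<Sum>x\<in>#M. inverse x)"
  using assms
proof (induction M)
  case (add b M)
  define S T n where "S = sum_mset M" and "T = (\<Sum>x\<in>#M. inverse x)" and "n = real (size M)"
  have b: "b > 0" and IH: "n\<^sup>2 \<le> S * T"
    using add by (auto simp: S_def T_def n_def)
  have "S \<ge> 0" "T \<ge> 0"
    using add.prems unfolding S_def T_def by (auto intro!: sum_mset_nonneg simp: less_imp_le)
  then have "sqrt (S * T) \<le> (b * T + S / b) / 2"
    using arith_geo_mean_sqrt[of "b * T" "S / b"] b by (simp add: ac_simps)
  moreover have "n \<le> sqrt (S * T)"
    using IH by (rule real_le_rsqrt)
  ultimately have "b * T + S / b \<ge> 2 * n" by argo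
  moreover have "(b + S) * (inverse b + T) = 1 + (b * T + S / b) + S * T"
    using b by (simp add: field_simps)
  ultimately have "(n + 1)\<^sup>2 \<le> (b + S) * (inverse b + T)"
    using IH by (simp add: power2_eq_square algebra_simps)
  then show ?case by (simp add: S_def T_def n_def add.commute)
qed simp

lemma proots_eq_replicate_plus_filter:
  fixes p :: "'a::idom poly"
  assumes "p \<noteq> 0" "\<not> P x0"
    and "(\<Sum>x\<in>{x. P x \<and> poly p x = 0}. order x p) + order x0 p = degree p"
  shows "proots p = replicate_mset (order x0 p) x0 + filter_mset P (proots p)"
proof -
  define C where "C = filter_mset (\<lambda>x. \<not> P x) (proots p)"
  have split: "proots p = filter_mset P (proots p) + C"
    unfolding C_def by (rule multiset_partition)
  have sub: "replicate_mset (order x0 p) x0 \<subseteq># C"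
    using assms(1,2) by (simp add: C_def count_le_replicate_mset_subset_eq[symmetric])
  have "size (proots p) = size (filter_mset P (proots p)) + size C"
    using split by (metis size_union)
  then have "size C \<le> order x0 p"
    using size_proots_le[of p] assms size_filter_proots[of p P] by simp
  then have "\<not> replicate_mset (order x0 p) x0 \<subset># C"
    using mset_subset_size by fastforce
  with sub have "C = replicate_mset (order x0 p) x0"
    by (simp add: subset_mset.le_less)
  with split show ?thesis by (simp add: add.commute)
qed

lemma coeff_1_neg_if_triple_positive_root:
  fixes x0 :: real and B :: "real multiset"
  defines "Q \<equiv> \<Prod>x\<in>#replicate_mset 3 x0 + B. [:-x, 1:]"
  assumes "x0 > 0" "\<forall>y\<in>#B. y < 0" "size B \<ge> 3"
    and "coeff Q (size B + 2) < 0"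
  shows "coeff Q 1 < 0"
proof (rule ccontr)
  assume "\<not> coeff Q 1 < 0"
  define S T where "S = (\<Sum>y\<in>#B. -y)" and "T = (\<Sum>y\<in>#B. inverse (-y))"
  have am_hm: "(real (size B))\<^sup>2 \<le> S * T"
    using square_size_le_sum_mset_mult_sum_inverse[of "image_mset uminus B"] assms(3)
    by (simp add: S_def T_def multiset.map_comp o_def)
  have sub_leading: "coeff Q (size B + 2) = S - 3 * x0"
    using coeff_prod_linear_factors_pred[of "replicate_mset 3 x0 + B"]
    by (simp add: Q_def S_def sum_mset_negf)
  have "0 \<notin># replicate_mset 3 x0 + B"
    using assms(2,3) by auto
  then have linear: "coeff Q 1 = x0 ^ 3 * (\<Prod>y\<in>#B. -y) * (3 / x0 - T)"
    using coeff_prod_linear_factors_1[of "replicate_mset 3 x0 + B"]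
    by (simp add: Q_def T_def sum_mset_negf divide_inverse algebra_simps)
  have "(\<Prod>y\<in>#B. -y) > 0"
    using assms(3) by (intro prod_mset_pos) auto
  with \<open>x0 > 0\<close> have "0 < x0 ^ 3 * (\<Prod>y\<in>#B. -y)"
    by simp
  with linear \<open>\<not> coeff Q 1 < 0\<close> have "T \<le> 3 / x0"
    by (metis mult_pos_neg not_le diff_ge_0_iff_ge)
  have "S \<ge> 0"
    using assms(3) unfolding S_def by (intro sum_mset_nonneg) auto
  with \<open>T \<le> 3 / x0\<close> have "S * T \<le> S * (3 / x0)"
    by (rule mult_left_mono)
  also have "\<dots> < 3 * x0 * (3 / x0)"
    using sub_leading assms(2,5) by (intro mult_strict_right_mono) auto
  also have "\<dots> = 3\<^sup>2"
    using assms(2) by (simp add: power2_eq_square)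
  also have "\<dots> \<le> (real (size B))\<^sup>2"
    using assms(4) by (intro power_mono) auto
  finally show False
    using am_hm by simp
qed

lemma coeff_1_neg_if_triple_positive_root_and_negative_roots:
  fixes p :: "real poly"
  assumes "lead_coeff p = 1" "x0 > 0" "order x0 p = 3" "degree p \<ge> 6"
    and "(\<Sum>x\<in>{x. x < 0 \<and> poly p x = 0}. order x p) + 3 = degree p"
    and "coeff p (degree p - 1) < 0"
  shows "coeff p 1 < 0"
proof -
  define B where "B = filter_mset (\<lambda>x. x < 0) (proots p)"
  have "p \<noteq> 0"
    using assms(1) by auto
  then have roots: "proots p = replicate_mset 3 x0 + B"
    using proots_eq_replicate_plus_filter[of p "\<lambda>x. x < 0" x0] assms(2,3,5) by (simp add: B_def)
  have "size B + 3 = degree p"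
    using size_filter_proots[OF \<open>p \<noteq> 0\<close>] assms(5) by (simp add: B_def)
  then have p: "p = (\<Prod>x\<in>#replicate_mset 3 x0 + B. [:-x, 1:])"
    using poly_eq_prod_linear_factors_proots[of p] roots assms(1) by simp
  have "\<forall>y\<in>#B. y < 0"
    by (simp add: B_def)
  moreover have "size B \<ge> 3" "degree p - 1 = size B + 2"
    using \<open>size B + 3 = degree p\<close> assms(4) by linarith+
  ultimately show ?thesis
    using coeff_1_neg_if_triple_positive_root[of x0 B] assms(2,6) unfolding p[symmetric]
    by simp
qed

lemma coeff_Ppoly:
  "coeff (Ppoly a) n =
     (if n = 11 then 1 else 0) - (if n = 10 then 1 else 0) + (if n < 10 then cf a n else 0)"
  unfolding Ppoly_def by (simp add: coeff_sum coeff_monom)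

lemma degree_Ppoly: "degree (Ppoly a) = 11"
proof (rule antisym)
  show "degree (Ppoly a) \<le> 11" by (rule degree_le) (simp add: coeff_Ppoly)
  show "11 \<le> degree (Ppoly a)" by (rule le_degree) (simp add: coeff_Ppoly)
qed

lemma cf_1_nonneg_closure_Tset:
  assumes "a \<in> closure Tset"
  shows "cf a 1 \<ge> 0"
proof -
  have "Tset \<subseteq> {a. cf a 1 \<ge> 0}"
    unfolding Tset_def by (auto dest: bspec[of _ _ 1])
  moreover have "closed {a. cf a 1 \<ge> 0}"
    unfolding cf_def by (intro closed_Collect_le continuous_intros)
  ultimately show ?thesis
    using assms closure_minimal by blast
qed

theorem lemma10:
  fixes \<Gamma> :: "(real ^ 10) set"
  assumes "Tset \<noteq> {}"
    and "\<Gamma> \<in> components Tset"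
  shows "\<not> (\<exists>a \<in> closure \<Gamma>. all_roots_real (Ppoly a)
            \<and> (\<exists>x>0. poly (Ppoly a) x = 0 \<and> order x (Ppoly a) = 3)
            \<and> (\<Sum>x\<in>{x. x < 0 \<and> poly (Ppoly a) x = 0}. order x (Ppoly a)) = 8)"
proof
  assume "\<exists>a \<in> closure \<Gamma>. all_roots_real (Ppoly a)
            \<and> (\<exists>x>0. poly (Ppoly a) x = 0 \<and> order x (Ppoly a) = 3)
            \<and> (\<Sum>x\<in>{x. x < 0 \<and> poly (Ppoly a) x = 0}. order x (Ppoly a)) = 8"
  then obtain a x0 where "a \<in> closure \<Gamma>" "x0 > 0" "order x0 (Ppoly a) = 3"
    and "(\<Sum>x\<in>{x. x < 0 \<and> poly (Ppoly a) x = 0}. order x (Ppoly a)) = 8"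
    by blast
  then have "coeff (Ppoly a) 1 < 0"
    by (intro coeff_1_neg_if_triple_positive_root_and_negative_roots)
      (simp_all add: degree_Ppoly coeff_Ppoly)
  moreover have "cf a 1 \<ge> 0"
    using \<open>a \<in> closure \<Gamma>\<close> closure_mono[OF in_components_subset[OF assms(2)]]
    by (blast intro: cf_1_nonneg_closure_Tset)
  ultimately show False
    by (simp add: coeff_Ppoly)
qed

end
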